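(* In the setting described in the context, fix $x^*\in X^*$ and $x\in\mathrm{dom}\,\Psi$, and let $R=\|x-x^*\|_L$. Then $$H(x,T(x))-F^*\leq\begin{cases}\left(1-\frac{F(x)-F^*}{2R^2}\right)(F(x)-F^* ), & \text{if } F(x)-F^*\leq R^2,\\ \frac12R^2<\frac12(F(x)-F^* ), & \text{otherwise.}\end{cases}$$
   Context: Let $U\in\mathbf{R}^{N\times N}$ be a column permutation of the $N\times N$ identity matrix, partitioned as $U=[U_1,\dots,U_n]$ with $U_i\in\mathbf{R}^{N\times N_i}$, $\sum_i N_i=N$. For $x\in\mathbf{R}^N$ write $x^{(i)}=U_i^Tx$, so $x=\sum_iU_ix^{(i)}$. Each $\mathbf{R}^{N_i}$ carries the norm $\|t\|_{(i)}=\langle B_it,t\rangle^{1/2}$ and dual norm $\|t\|_{(i)}^*=\langle B_i^{-1}t,t\rangle^{1/2}$ with $B_i$ positive definite. Consider minimizing $F(x)=f(x)+\Psi(x)$ over $\mathbf{R}^N$, where $f$ is convex and differentiable with $\|\nabla_if(x+U_it)-\nabla_if(x)\|_{(i)}^*\leq L_i\|t\|_{(i)}$ for all $x,t,i$ (constants $L_i>0$, $\nabla_if(x)=U_i^T\nabla f(x)$), and $\Psi(x)=\sum_i\Psi_i(x^{(i)})$ with each $\Psi_i$ proper closed convex. The problem has a minimizer; $F^*$ is the optimal value and $X^*$ the set of minimizers. Let $\|x\|_L=(\sum_iL_i\|x^{(i)}\|_{(i)}^2)^{1/2}$. Define $V_i(x,t)=\langle\nabla_if(x),t\rangle+\frac{L_i}{2}\|t\|_{(i)}^2+\Psi_i(x^{(i)}+t)$,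 $T^{(i)}(x)=\arg\min_tV_i(x,t)$, $T(x)=\sum_iU_iT^{(i)}(x)$, and $H(x,T)=f(x)+\langle\nabla f(x),T\rangle+\frac12\|T\|_L^2+\Psi(x+T)$. *)

theory Defs
  imports "HOL-Analysis.Analysis"
begin

text \<open>Block spaces R^{N_i} are represented by functions nat => real vanishing at indices >= N_i.\<close>

definition bvec :: "nat \<Rightarrow> (nat \<Rightarrow> real) set" where
  "bvec m = {t. \<forall>j\<ge>m. t j = 0}"

definition qf :: "nat \<Rightarrow> (nat \<Rightarrow> nat \<Rightarrow> real) \<Rightarrow> (nat \<Rightarrow> real) \<Rightarrow> real" where
  "qf m B t = (\<Sum>j<m. \<Sum>k<m. B j k * t k * t j)"

definition pos_def_mat :: "nat \<Rightarrow> (nat \<Rightarrow> nat \<Rightarrow> real) \<Rightarrow> bool" where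
  "pos_def_mat m B \<longleftrightarrow> (\<forall>j<m. \<forall>k<m. B j k = B k j) \<and>
     (\<forall>t\<in>bvec m. t \<noteq> (\<lambda>_. 0) \<longrightarrow> qf m B t > 0)"

definition matinv :: "nat \<Rightarrow> (nat \<Rightarrow> nat \<Rightarrow> real) \<Rightarrow> (nat \<Rightarrow> nat \<Rightarrow> real)" where
  "matinv m B = (THE M. (\<forall>j<m. \<forall>l<m. (\<Sum>k<m. B j k * M k l) = (if j = l then 1 else 0))
       \<and> (\<forall>j k. (m \<le> j \<or> m \<le> k) \<longrightarrow> M j k = 0))"

definition bnorm :: "nat \<Rightarrow> (nat \<Rightarrow> nat \<Rightarrow> real) \<Rightarrow> (nat \<Rightarrow> real) \<Rightarrow> real" where
  "bnorm m B t = sqrt (qf m B t)"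

definition dnorm :: "nat \<Rightarrow> (nat \<Rightarrow> nat \<Rightarrow> real) \<Rightarrow> (nat \<Rightarrow> real) \<Rightarrow> real" where
  "dnorm m B t = sqrt (qf m (matinv m B) t)"

definition col_perm :: "real^'n^'n \<Rightarrow> bool" where
  "col_perm U \<longleftrightarrow> (\<exists>\<sigma>. bij \<sigma> \<and> U = (\<chi> k l. if k = \<sigma> l then 1 else 0))"

text \<open>Column j of U_i is column e(i,j) of U. x^(i) = U_i^T x, and U_i t.\<close>
definition blk :: "real^'n^'n \<Rightarrow> (nat \<times> nat \<Rightarrow> 'n) \<Rightarrow> (nat \<Rightarrow> nat) \<Rightarrow> nat \<Rightarrow> real^'n \<Rightarrow> (nat \<Rightarrow> real)" where
  "blk U e N i x = (\<lambda>j. if j < N i then (transpose U *v x) $ e (i, j) else 0)"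

definition emb :: "real^'n^'n \<Rightarrow> (nat \<times> nat \<Rightarrow> 'n) \<Rightarrow> (nat \<Rightarrow> nat) \<Rightarrow> nat \<Rightarrow> (nat \<Rightarrow> real) \<Rightarrow> real^'n" where
  "emb U e N i t = (\<chi> k. \<Sum>j<N i. U $ k $ e (i, j) * t j)"

definition grad :: "(real^'n \<Rightarrow> real) \<Rightarrow> real^'n \<Rightarrow> real^'n" where
  "grad f x = (SOME g. (f has_derivative (\<lambda>h. g \<bullet> h)) (at x))"

definition Psi :: "nat \<Rightarrow> (nat \<Rightarrow> (nat \<Rightarrow> real) \<Rightarrow> ereal) \<Rightarrow> real^'n^'n \<Rightarrow> (nat \<times> nat \<Rightarrow> 'n)
    \<Rightarrow> (nat \<Rightarrow> nat) \<Rightarrow> real^'n \<Rightarrow> ereal" where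
  "Psi n Ps U e N x = (\<Sum>i<n. Ps i (blk U e N i x))"

definition Fobj :: "(real^'n \<Rightarrow> real) \<Rightarrow> nat \<Rightarrow> (nat \<Rightarrow> (nat \<Rightarrow> real) \<Rightarrow> ereal) \<Rightarrow> real^'n^'n
    \<Rightarrow> (nat \<times> nat \<Rightarrow> 'n) \<Rightarrow> (nat \<Rightarrow> nat) \<Rightarrow> real^'n \<Rightarrow> ereal" where
  "Fobj f n Ps U e N x = ereal (f x) + Psi n Ps U e N x"

definition Lnorm :: "nat \<Rightarrow> (nat \<Rightarrow> real) \<Rightarrow> (nat \<Rightarrow> nat \<Rightarrow> nat \<Rightarrow> real) \<Rightarrow> real^'n^'n
    \<Rightarrow> (nat \<times> nat \<Rightarrow> 'n) \<Rightarrow> (nat \<Rightarrow> nat) \<Rightarrow> real^'n \<Rightarrow> real" where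
  "Lnorm n L B U e N x = sqrt (\<Sum>i<n. L i * (bnorm (N i) (B i) (blk U e N i x))\<^sup>2)"

definition Vfun :: "(real^'n \<Rightarrow> real) \<Rightarrow> (nat \<Rightarrow> (nat \<Rightarrow> real) \<Rightarrow> ereal) \<Rightarrow> (nat \<Rightarrow> real)
    \<Rightarrow> (nat \<Rightarrow> nat \<Rightarrow> nat \<Rightarrow> real) \<Rightarrow> real^'n^'n \<Rightarrow> (nat \<times> nat \<Rightarrow> 'n) \<Rightarrow> (nat \<Rightarrow> nat)
    \<Rightarrow> nat \<Rightarrow> real^'n \<Rightarrow> (nat \<Rightarrow> real) \<Rightarrow> ereal" where
  "Vfun f Ps L B U e N i x t =
     ereal ((\<Sum>j<N i. blk U e N i (grad f x) j * t j) + L i / 2 * (bnorm (N i) (B i) t)\<^sup>2)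
     + Ps i (\<lambda>j. blk U e N i x j + t j)"

definition Tblk where
  "Tblk f Ps L B U e N i x = (THE t. t \<in> bvec (N i) \<and>
      (\<forall>s\<in>bvec (N i). Vfun f Ps L B U e N i x t \<le> Vfun f Ps L B U e N i x s))"

definition Tmap where
  "Tmap n f Ps L B U e N x = (\<Sum>i<n. emb U e N i (Tblk f Ps L B U e N i x))"

definition Hfun where
  "Hfun n f Ps L B U e N x T =
     ereal (f x + grad f x \<bullet> T + 1/2 * (Lnorm n L B U e N T)\<^sup>2) + Psi n Ps U e N (x + T)"

definition proper_closed_convex :: "nat \<Rightarrow> ((nat \<Rightarrow> real) \<Rightarrow> ereal) \<Rightarrow> bool" where
  "proper_closed_convex m g \<longleftrightarrow>
     (\<exists>t\<in>bvec m. g t < \<infinity>) \<and> (\<forall>t\<in>bvec m. g t > -\<infinity>) \<and>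
     closed {(t, r::real). t \<in> bvec m \<and> g t \<le> ereal r} \<and>
     (\<forall>t\<in>bvec m. \<forall>s\<in>bvec m. \<forall>a::real. 0 \<le> a \<and> a \<le> 1 \<longrightarrow>
        g (\<lambda>j. a * t j + (1 - a) * s j) \<le> ereal a * g t + ereal (1 - a) * g s)"

end

theory Submission imports Defs begin

text \<open>Choosing \<open>z = a (x\<^sup>* - x)\<close> in the model \<open>H(x, \<cdot>)\<close>, which \<open>T(x)\<close> minimizes blockwise,
  convexity of \<open>f\<close> gives \<open>H(x, z) \<le> F(x + z) + \<parallel>z\<parallel>\<^sub>L\<^sup>2/2\<close> and convexity of \<open>F\<close> then gives
  \<open>H(x, T(x)) - F\<^sup>* \<le> (1 - a) (F(x) - F\<^sup>*) + a\<^sup>2 R\<^sup>2/2\<close> for every \<open>a \<in> [0, 1]\<close>; the two cases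
  correspond to the optimal choices \<open>a = (F(x) - F\<^sup>*)/R\<^sup>2\<close> and \<open>a = 1\<close>.
  Most of the work goes into showing that \<open>T(x)\<close>, defined by a definite description, really is
  the unique blockwise minimizer: each block model is a strongly convex quadratic plus a closed
  proper convex function, so it is coercive, lower semicontinuous and strictly convex.\<close>

lemma closed_sublevels_attains_min:
  fixes W :: "'a::topological_space \<Rightarrow> ereal"
  assumes K: "compact K" "K \<noteq> {}" and closed: "\<And>c. closed {y\<in>K. W y \<le> ereal c}"
  shows "\<exists>y\<in>K. \<forall>z\<in>K. W y \<le> W z"
proof -
  define \<mu> where "\<mu> = (INF y\<in>K. W y)"
  show ?thesis
  proof (cases "\<mu> = \<infinity>")
    case True
    have "W z = \<infinity>" if "z \<in> K" for z
      using INF_lower[OF that, of W] True unfolding \<mu>_def by simp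
    then show ?thesis using K(2) by auto
  next
    case False
    have "K \<inter> (\<Inter>c\<in>{c. \<mu> < ereal c}. {y\<in>K. W y \<le> ereal c}) \<noteq> {}"
    proof (rule compact_imp_fip_image[OF K(1) closed])
      fix C assume C: "finite C" "C \<subseteq> {c. \<mu> < ereal c}"
      show "K \<inter> (\<Inter>c\<in>C. {y\<in>K. W y \<le> ereal c}) \<noteq> {}"
      proof (cases "C = {}")
        case True then show ?thesis using K(2) by simp
      next
        case False
        then have "Min C \<in> C" using C(1) by simp
        then have "\<mu> < ereal (Min C)" using C(2) by auto
        then obtain y where y: "y \<in> K" "W y < ereal (Min C)" unfolding \<mu>_def by (auto simp: INF_less_iff)
        have "W y \<le> ereal c" if "c \<in> C" for c
          using y(2) Min_le[OF C(1) that] by (meson ereal_less_eq(3) less_imp_le order_trans)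
        then show ?thesis using y(1) by blast
      qed
    qed
    then obtain y where y: "y \<in> K" "\<And>c. \<mu> < ereal c \<Longrightarrow> W y \<le> ereal c" by auto
    have "W y \<le> \<mu>"
    proof (rule ccontr)
      assume "\<not> W y \<le> \<mu>"
      then have "\<mu> < W y" by simp
      then obtain c where "\<mu> < ereal c" "ereal c < W y" using ereal_dense2 by blast
      with y show False by force
    qed
    then show ?thesis using y(1) unfolding \<mu>_def by (meson INF_lower order_trans)
  qed
qed

lemma homogeneous_quadratic_coercive_on_subspace:
  fixes Q :: "'a::euclidean_space \<Rightarrow> real"
  assumes S: "subspace S" "closed S" and cont: "continuous_on S Q"
    and hom: "\<And>a y. Q (a *\<^sub>R y) = a\<^sup>2 * Q y"
    and pos: "\<And>y. y \<in> S \<Longrightarrow> y \<noteq> 0 \<Longrightarrow> Q y > 0"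
  obtains c where "c > 0" "\<And>y. y \<in> S \<Longrightarrow> c * (norm y)\<^sup>2 \<le> Q y"
proof -
  have Q0: "Q 0 = 0" using hom[of 0 0] by simp
  have unit: "(1 / norm y) *\<^sub>R y \<in> S \<inter> sphere 0 1" if "y \<in> S" "y \<noteq> 0" for y
    using that S(1) by (simp add: subspace_scale)
  show ?thesis
  proof (cases "S \<inter> sphere 0 1 = {}")
    case True
    then have "S \<subseteq> {0}" using unit by blast
    then show ?thesis using that[of 1] Q0 by force
  next
    case False
    have "compact (S \<inter> sphere 0 1)" using S(2) by (simp add: closed_Int_compact)
    then obtain u where u: "u \<in> S \<inter> sphere 0 1" "\<And>z. z \<in> S \<inter> sphere 0 1 \<Longrightarrow> Q u \<le> Q z"
      using continuous_attains_inf[of "S \<inter> sphere 0 1" Q] False continuous_on_subset[OF cont]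
      by blast
    have "Q u > 0" using pos[of u] u(1) by (metis IntD1 IntD2 mem_sphere_0 norm_zero zero_neq_one)
    moreover have "Q u * (norm y)\<^sup>2 \<le> Q y" if "y \<in> S" for y
    proof (cases "y = 0")
      case True then show ?thesis using Q0 by simp
    next
      case False
      have "Q u \<le> Q ((1 / norm y) *\<^sub>R y)" using u(2) unit[OF that False] .
      also have "\<dots> = Q y / (norm y)\<^sup>2" unfolding hom by (simp add: power_divide)
      finally show ?thesis using False by (simp add: field_simps)
    qed
    ultimately show ?thesis using that[of "Q u"] by (simp add: mult.commute)
  qed
qed

context
  fixes W P :: "'a::euclidean_space \<Rightarrow> ereal" and l Q :: "'a \<Rightarrow> real" and S :: "'a set" and c :: real
  assumes S: "subspace S" and lin: "linear l"
    and Q_hom: "\<And>a y. Q (a *\<^sub>R y) = a\<^sup>2 * Q y"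
    and Q_coercive: "\<And>y. y \<in> S \<Longrightarrow> c * (norm y)\<^sup>2 \<le> Q y"
    and P_finite: "\<And>y. y \<in> S \<Longrightarrow> P y > -\<infinity>"
    and P_convex: "\<And>y a. y \<in> S \<Longrightarrow> 0 \<le> a \<Longrightarrow> a \<le> 1 \<Longrightarrow>
       P (a *\<^sub>R y) \<le> ereal a * P y + ereal (1 - a) * P 0"
    and W: "\<And>y. W y = ereal (l y + Q y) + P y"
begin

text \<open>Convexity along the ray through a unit vector \<open>u\<close> turns a lower bound \<open>m\<close> for \<open>W\<close> on the
  unit sphere into quadratic growth of \<open>W\<close> outside the unit ball.\<close>
lemma ray_growth:
  assumes P0: "P 0 = ereal p0" and m: "\<And>u. u \<in> S \<Longrightarrow> norm u = 1 \<Longrightarrow> ereal m \<le> W u"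
    and y: "y \<in> S" "norm y \<ge> 1"
  shows "ereal (c * norm y * (norm y - 1) + norm y * m - (norm y - 1) * p0) \<le> W y"
proof (cases "P y = \<infinity>")
  case True then show ?thesis using W[of y] by simp
next
  case False
  then obtain py where py: "P y = ereal py" using P_finite[OF y(1)] by (cases "P y") auto
  define s where "s = norm y"
  have s: "s \<ge> 1" "s > 0" using y(2) unfolding s_def by auto
  define u where "u = (1/s) *\<^sub>R y"
  have "y \<noteq> 0" using s(2) unfolding s_def by auto
  then have u: "u \<in> S" "norm u = 1" unfolding u_def s_def using S y(1) by (auto simp: subspace_scale)
  have "P u \<le> ereal (1/s) * P y + ereal (1 - 1/s) * P 0"
    unfolding u_def by (rule P_convex) (use y(1) s in auto)
  then have Pu: "P u \<le> ereal (py / s + (1 - 1/s) * p0)" using py P0 by simp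
  then obtain pu where pu: "P u = ereal pu" using P_finite[OF u(1)] by (cases "P u") auto
  have "ereal m \<le> W u" using m[OF u] .
  moreover have "l u = l y / s" unfolding u_def using lin by (simp add: linear_scale)
  moreover have "Q u = Q y / s\<^sup>2" unfolding u_def Q_hom by (simp add: power_divide)
  ultimately have "m \<le> l y / s + Q y / s\<^sup>2 + pu" using W[of u] pu by simp
  then have "s * m \<le> s * (l y / s + Q y / s\<^sup>2 + pu)" using s by simp
  also have "\<dots> = l y + Q y / s + s * pu" using s by (simp add: field_simps power2_eq_square)
  finally have "s * m \<le> l y + Q y / s + s * pu" .
  moreover have "s * pu \<le> py + (s - 1) * p0"
  proof -
    have "s * pu \<le> s * (py / s + (1 - 1/s) * p0)" using Pu pu s by simp
    also have "\<dots> = py + (s - 1) * p0" using s by (simp add: field_simps)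
    finally show ?thesis .
  qed
  moreover have "c * s * (s - 1) \<le> Q y * (1 - 1/s)"
    using mult_right_mono[OF Q_coercive[OF y(1)], of "1 - 1/s"] s
    by (simp add: s_def field_simps power2_eq_square)
  moreover have "Q y = Q y / s + Q y * (1 - 1/s)" using s by (simp add: field_simps)
  ultimately have "c * s * (s - 1) + s * m - (s - 1) * p0 \<le> l y + Q y + py" by linarith
  then show ?thesis using W[of y] py s_def by simp
qed

lemma coercive_convex_attains_min:
  assumes closed_S: "closed S" and c: "c > 0" and P0: "P 0 < \<infinity>"
    and closed: "\<And>r. closed {y \<in> S. W y \<le> ereal r}"
  shows "\<exists>y\<in>S. \<forall>z\<in>S. W y \<le> W z"
proof -
  have min_ball: "\<exists>y\<in>S \<inter> cball 0 r. \<forall>z\<in>S \<inter> cball 0 r. W y \<le> W z" if "r \<ge> 0" for r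
  proof (rule closed_sublevels_attains_min)
    show "compact (S \<inter> cball 0 r)" using closed_S by (simp add: closed_Int_compact)
    show "S \<inter> cball 0 r \<noteq> {}" using that subspace_0[OF S] by auto
    have "{y \<in> S \<inter> cball 0 r. W y \<le> ereal r'} = {y \<in> S. W y \<le> ereal r'} \<inter> cball 0 r" for r'
      by auto
    then show "closed {y \<in> S \<inter> cball 0 r. W y \<le> ereal r'}" for r'
      using closed by (simp add: closed_Int)
  qed
  have S0: "0 \<in> S" using subspace_0[OF S] .
  have W0: "W 0 = P 0" using W[of 0] Q_hom[of 0 0] lin by (simp add: linear_0 zero_ereal_def)
  obtain p0 where p0: "P 0 = ereal p0" using P0 P_finite[OF S0] by (cases "P 0") auto
  obtain y1 where y1: "y1 \<in> S" "\<And>z. z \<in> S \<Longrightarrow> norm z \<le> 1 \<Longrightarrow> W y1 \<le> W z"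
    using min_ball[of 1] by auto
  have "W y1 \<le> W 0" using y1(2)[OF S0] by simp
  moreover have "W y1 > -\<infinity>" using W[of y1] P_finite[OF y1(1)] by (cases "P y1") auto
  ultimately obtain m1 where m1: "W y1 = ereal m1" using W0 p0 by (cases "W y1") auto
  define r where "r = max 1 ((\<bar>m1 - c - p0\<bar> + 1) / c)"
  have far: "W 0 < W y" if y: "y \<in> S" "norm y > r" for y
  proof -
    define s where "s = norm y"
    have s: "s \<ge> 1" "c * s > \<bar>m1 - c - p0\<bar> + 1"
      using y c unfolding r_def s_def by (auto simp: field_simps)
    then have "s * (c * s + (m1 - c - p0)) > 0" by (intro mult_pos_pos) linarith+
    then have "ereal p0 < ereal (c * s * (s - 1) + s * m1 - (s - 1) * p0)"
      by (simp add: algebra_simps)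
    also have "\<dots> \<le> W y"
      using ray_growth[OF p0 _ y(1)] y1(2) m1 s unfolding s_def by simp
    finally show ?thesis using W0 p0 by simp
  qed
  have "r \<ge> 0" unfolding r_def by simp
  then obtain ys where ys: "ys \<in> S" "\<And>z. z \<in> S \<Longrightarrow> norm z \<le> r \<Longrightarrow> W ys \<le> W z"
    using min_ball[OF \<open>r \<ge> 0\<close>] by auto
  have "W ys \<le> W z" if "z \<in> S" for z
  proof (cases "norm z \<le> r")
    case False
    then have "W 0 < W z" using far that by simp
    moreover have "W ys \<le> W 0" using ys(2)[OF S0] \<open>r \<ge> 0\<close> by simp
    ultimately show ?thesis by simp
  qed (use ys that in simp)
  then show ?thesis using ys(1) by blast
qed

end

lemma grad_has_derivative:
  fixes f :: "real^'n \<Rightarrow> real"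
  assumes "f differentiable (at y)"
  shows "(f has_derivative (\<lambda>h. grad f y \<bullet> h)) (at y)"
proof -
  obtain D where D: "(f has_derivative D) (at y)" using assms by (auto simp: differentiable_def)
  have "D = (\<lambda>h. adjoint D 1 \<bullet> h)"
    using adjoint_works[OF has_derivative_linear[OF D], of _ 1] by (auto simp: inner_commute)
  with D have "\<exists>g. (f has_derivative (\<lambda>h. g \<bullet> h)) (at y)" by metis
  then show ?thesis unfolding grad_def by (rule someI_ex)
qed

lemma convex_grad_lower_bound:
  fixes f :: "real^'n \<Rightarrow> real"
  assumes convex: "convex_on UNIV f" and diff: "f differentiable (at x)"
  shows "f x + grad f x \<bullet> z \<le> f (x + z)"
proof -
  define h where "h = (\<lambda>t::real. f (x + t *\<^sub>R z))"
  have "convex_on UNIV h"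
  proof (rule convex_onI)
    fix t a b :: real assume "0 < t" "t < 1"
    have "x + ((1 - t) *\<^sub>R a + t *\<^sub>R b) *\<^sub>R z = (1 - t) *\<^sub>R (x + a *\<^sub>R z) + t *\<^sub>R (x + b *\<^sub>R z)"
      by (simp add: algebra_simps)
    then show "h ((1 - t) *\<^sub>R a + t *\<^sub>R b) \<le> (1 - t) * h a + t * h b"
      unfolding h_def using convex_onD[OF convex, of t] \<open>0 < t\<close> \<open>t < 1\<close> by simp
  qed simp
  moreover have "(h has_real_derivative (grad f x \<bullet> z)) (at 0)"
  proof -
    have line: "((\<lambda>t::real. x + t *\<^sub>R z) has_derivative (\<lambda>t. t *\<^sub>R z)) (at 0)"
      by (auto intro!: derivative_eq_intros)
    have "(f has_derivative (\<lambda>v. grad f x \<bullet> v)) (at (x + 0 *\<^sub>R z))"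
      using grad_has_derivative[OF diff] by simp
    from has_derivative_compose[OF line this]
    have "(h has_derivative (\<lambda>t. grad f x \<bullet> (t *\<^sub>R z))) (at 0)"
      unfolding h_def by (simp add: comp_def)
    then show ?thesis
      unfolding has_field_derivative_def by (simp add: mult.commute[of _ "grad f x \<bullet> z"])
  qed
  ultimately have "h 1 - h 0 \<ge> (grad f x \<bullet> z) * (1 - 0)"
    using convex_on_imp_above_tangent[of UNIV h 0 1] by simp
  then show ?thesis unfolding h_def by simp
qed

lemma qf_zero: "qf m B (\<lambda>_. 0) = 0"
  by (simp add: qf_def)

lemma qf_nonneg: "pos_def_mat m B \<Longrightarrow> t \<in> bvec m \<Longrightarrow> 0 \<le> qf m B t"
  unfolding pos_def_mat_def by (cases "t = (\<lambda>_. 0)") (auto simp: qf_zero intro: less_imp_le)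

lemma bnorm_power2: "pos_def_mat m B \<Longrightarrow> t \<in> bvec m \<Longrightarrow> (bnorm m B t)\<^sup>2 = qf m B t"
  by (simp add: bnorm_def qf_nonneg)

lemma qf_scale: "qf m B (\<lambda>j. a * t j) = a\<^sup>2 * qf m B t"
  by (simp add: qf_def sum_distrib_left power2_eq_square mult_ac)

lemma bnorm_scale: "bnorm m B (\<lambda>j. c * t j) = \<bar>c\<bar> * bnorm m B t"
  by (simp add: bnorm_def qf_scale real_sqrt_mult)

lemma qf_midpoint:
  "qf m B (\<lambda>j. (s j + t j) / 2) = (qf m B s + qf m B t) / 2 - qf m B (\<lambda>j. s j - t j) / 4"
proof -
  have "qf m B (\<lambda>j. (s j + t j) / 2) = (\<Sum>j<m. \<Sum>k<m.
      (B j k * s k * s j + B j k * t k * t j) / 2 - B j k * (s k - t k) * (s j - t j) / 4)"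
    unfolding qf_def by (intro sum.cong refl) (simp add: field_simps)
  then show ?thesis
    unfolding qf_def by (simp add: sum_subtractf sum_divide_distrib[symmetric] sum.distrib)
qed

lemma bvec_add: "s \<in> bvec m \<Longrightarrow> t \<in> bvec m \<Longrightarrow> (\<lambda>j. s j + t j) \<in> bvec m"
  by (simp add: bvec_def)

definition block_model ::
    "nat \<Rightarrow> (nat \<Rightarrow> nat \<Rightarrow> real) \<Rightarrow> real \<Rightarrow> (nat \<Rightarrow> real) \<Rightarrow> ((nat \<Rightarrow> real) \<Rightarrow> ereal)
      \<Rightarrow> (nat \<Rightarrow> real) \<Rightarrow> (nat \<Rightarrow> real) \<Rightarrow> ereal" where
  "block_model m Bm l g P x0 t =
     ereal ((\<Sum>j<m. g j * t j) + l / 2 * (bnorm m Bm t)\<^sup>2) + P (\<lambda>j. x0 j + t j)"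

lemma Vfun_eq_block_model:
  "Vfun f Ps L B U e N i x =
     block_model (N i) (B i) (L i) (blk U e N i (grad f x)) (Ps i) (blk U e N i x)"
  by (simp add: Vfun_def block_model_def fun_eq_iff)

lemma block_model_eq:
  "pos_def_mat m Bm \<Longrightarrow> t \<in> bvec m \<Longrightarrow> block_model m Bm l g P x0 t =
     ereal ((\<Sum>j<m. g j * t j) + l / 2 * qf m Bm t) + P (\<lambda>j. x0 j + t j)"
  by (simp add: block_model_def bnorm_power2)

text \<open>The midpoint of two distinct minimizers would be strictly better: the quadratic part
  drops by \<open>l/8 \<langle>B d, d\<rangle> > 0\<close> with \<open>d\<close> their difference.\<close>
lemma block_model_minimizer_unique:
  assumes Bm: "pos_def_mat m Bm" and l: "l > 0" and P: "proper_closed_convex m P"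
    and x0: "x0 \<in> bvec m" and Px0: "P x0 < \<infinity>"
    and t1: "t1 \<in> bvec m" "\<And>s. s \<in> bvec m \<Longrightarrow> block_model m Bm l g P x0 t1 \<le> block_model m Bm l g P x0 s"
    and t2: "t2 \<in> bvec m" "\<And>s. s \<in> bvec m \<Longrightarrow> block_model m Bm l g P x0 t2 \<le> block_model m Bm l g P x0 s"
  shows "t1 = t2"
proof (rule ccontr)
  assume ne: "t1 \<noteq> t2"
  define V where "V = block_model m Bm l g P x0"
  define h where "h = (\<lambda>t. (\<Sum>j<m. g j * t j) + l / 2 * qf m Bm t)"
  have V: "V t = ereal (h t) + P (\<lambda>j. x0 j + t j)" if "t \<in> bvec m" for t
    using block_model_eq[OF Bm that] unfolding V_def h_def by simp
  have P_finite: "P t > -\<infinity>" if "t \<in> bvec m" for t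
    using P that unfolding proper_closed_convex_def by blast
  have zero: "(\<lambda>_. 0::real) \<in> bvec m" by (simp add: bvec_def)
  have "V (\<lambda>_. 0) = P x0" using V[OF zero] by (simp add: h_def qf_zero zero_ereal_def)
  then have real_min: "\<exists>p. P (\<lambda>j. x0 j + t j) = ereal p"
    if "t \<in> bvec m" "\<And>s. s \<in> bvec m \<Longrightarrow> V t \<le> V s" for t
    using that(2)[OF zero] Px0 P_finite[OF bvec_add[OF x0 that(1)]] V[OF that(1)]
    by (cases "P (\<lambda>j. x0 j + t j)") auto
  obtain p1 where p1: "P (\<lambda>j. x0 j + t1 j) = ereal p1" using real_min t1 unfolding V_def by blast
  obtain p2 where p2: "P (\<lambda>j. x0 j + t2 j) = ereal p2" using real_min t2 unfolding V_def by blast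
  have same_value: "h t1 + p1 = h t2 + p2"
    using t1(2)[OF t2(1)] t2(2)[OF t1(1)] V[OF t1(1)] V[OF t2(1)] p1 p2
    unfolding V_def by simp
  define tm where "tm = (\<lambda>j. (t1 j + t2 j) / 2)"
  have tm: "tm \<in> bvec m" using t1(1) t2(1) by (simp add: bvec_def tm_def)
  have "(\<lambda>j. x0 j + tm j) = (\<lambda>j. (1/2) * (x0 j + t1 j) + (1 - 1/2) * (x0 j + t2 j))"
    by (auto simp: tm_def field_simps)
  moreover have "P (\<lambda>j. a * s j + (1 - a) * t j) \<le> ereal a * P s + ereal (1 - a) * P t"
    if "s \<in> bvec m" "t \<in> bvec m" "0 \<le> a" "a \<le> 1" for s t a
    using P that unfolding proper_closed_convex_def by blast
  note this[OF bvec_add[OF x0 t1(1)] bvec_add[OF x0 t2(1)], of "1/2"]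
  ultimately have P_tm: "P (\<lambda>j. x0 j + tm j) \<le> ereal ((p1 + p2) / 2)"
    using p1 p2 by (simp add: field_simps)
  define d where "d = (\<lambda>j. t1 j - t2 j)"
  have "d \<in> bvec m" "d \<noteq> (\<lambda>_. 0)" using t1(1) t2(1) ne by (auto simp: bvec_def d_def fun_eq_iff)
  then have "qf m Bm d > 0" using Bm unfolding pos_def_mat_def by auto
  then have "l / 8 * qf m Bm d > 0" using l by simp
  moreover have "h tm = (h t1 + h t2) / 2 - l / 8 * qf m Bm d"
  proof -
    have "(\<Sum>j<m. g j * tm j) = ((\<Sum>j<m. g j * t1 j) + (\<Sum>j<m. g j * t2 j)) / 2"
      by (simp add: tm_def sum_divide_distrib[symmetric] sum.distrib[symmetric] algebra_simps)
    then show ?thesis unfolding h_def tm_def d_def qf_midpoint by (simp add: algebra_simps)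
  qed
  ultimately have better: "h tm + (p1 + p2) / 2 < h t1 + p1" using same_value by (simp add: field_simps)
  have "V tm \<le> ereal (h tm) + ereal ((p1 + p2) / 2)"
    unfolding V[OF tm] by (rule add_left_mono[OF P_tm])
  also have "\<dots> < V t1" using V[OF t1(1)] p1 better by simp
  finally show False using t1(2)[OF tm] unfolding V_def by simp
qed

lemma blk_in_bvec: "blk U e N i y \<in> bvec (N i)"
  by (simp add: blk_def bvec_def)

lemma Hfun_le_Fobj:
  assumes "convex_on UNIV f" and "f differentiable (at x)"
  shows "Hfun n f Ps L B U e N x z \<le> Fobj f n Ps U e N (x + z) + ereal ((Lnorm n L B U e N z)\<^sup>2 / 2)"
  using convex_grad_lower_bound[OF assms, of z] unfolding Hfun_def Fobj_def
  by (cases "Psi n Ps U e N (x + z)") auto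

lemma convex_upper_bound_cases:
  fixes h :: ereal and D R :: real
  assumes D: "0 \<le> D" and bound: "\<And>a. 0 \<le> a \<Longrightarrow> a \<le> 1 \<Longrightarrow> h \<le> ereal ((1 - a) * D + a\<^sup>2 / 2 * R\<^sup>2)"
  shows "(D \<le> R\<^sup>2 \<longrightarrow> h \<le> ereal ((1 - D / (2 * R\<^sup>2)) * D)) \<and>
         (\<not> D \<le> R\<^sup>2 \<longrightarrow> h \<le> ereal (R\<^sup>2 / 2) \<and> R\<^sup>2 / 2 < D / 2)"
proof -
  have "h \<le> ereal ((1 - D / (2 * R\<^sup>2)) * D)" if small: "D \<le> R\<^sup>2"
  proof (cases "R\<^sup>2 = 0")
    case True
    then show ?thesis using bound[of 0] small D by simp
  next
    case False
    then have "R\<^sup>2 > 0" by simp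
    then have "(1 - D / R\<^sup>2) * D + (D / R\<^sup>2)\<^sup>2 / 2 * R\<^sup>2 = (1 - D / (2 * R\<^sup>2)) * D"
      by (simp add: field_simps power2_eq_square)
    then show ?thesis using bound[of "D / R\<^sup>2"] small D \<open>R\<^sup>2 > 0\<close> by simp
  qed
  moreover have "h \<le> ereal (R\<^sup>2 / 2)" using bound[of 1] by simp
  ultimately show ?thesis by auto
qed

locale block_partition =
  fixes n :: nat and N :: "nat \<Rightarrow> nat" and U :: "real^'n^'n" and e :: "nat \<times> nat \<Rightarrow> 'n"
    and \<sigma> :: "'n \<Rightarrow> 'n"
  assumes bij_\<sigma>: "bij \<sigma>" and U_eq: "U = (\<chi> k l. if k = \<sigma> l then 1 else 0)"
    and part: "bij_betw e {(i, j). i < n \<and> j < N i} UNIV"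
begin

lemma blk_eq: "blk U e N i x = (\<lambda>j. if j < N i then x $ \<sigma> (e (i, j)) else 0)"
proof -
  have "(\<Sum>j\<in>UNIV. (if j = a then 1 else 0) * x $ j) = x $ a" for a
  proof -
    have "(\<Sum>j\<in>UNIV. (if j = a then 1 else 0) * x $ j) = (\<Sum>j\<in>UNIV. if j = a then x $ j else 0)"
      by (rule sum.cong) auto
    then show ?thesis by simp
  qed
  then have "(transpose U *v x) $ l = x $ \<sigma> l" for l
    by (simp add: U_eq matrix_vector_mult_def transpose_def)
  then show ?thesis unfolding blk_def by auto
qed

lemma emb_component: "emb U e N i t $ k = (\<Sum>j<N i. if k = \<sigma> (e (i, j)) then t j else 0)"
  unfolding emb_def U_eq by (auto intro: sum.cong)

lemma block_coordinate_inj: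
  assumes "i < n" "j < N i" "i' < n" "j' < N i'" "\<sigma> (e (i, j)) = \<sigma> (e (i', j'))"
  shows "i = i' \<and> j = j'"
proof -
  have "e (i, j) = e (i', j')" using assms(5) bij_\<sigma> by (meson bij_is_inj injD)
  then show ?thesis using part assms unfolding bij_betw_def inj_on_def by blast
qed

lemma blk_emb:
  assumes "i < n" "i' < n" "t \<in> bvec (N i)"
  shows "blk U e N i' (emb U e N i t) = (if i' = i then t else (\<lambda>_. 0))"
proof (rule ext)
  fix j
  show "blk U e N i' (emb U e N i t) j = (if i' = i then t else (\<lambda>_. 0)) j"
  proof (cases "j < N i'")
    case True
    have "emb U e N i t $ \<sigma> (e (i', j)) = (\<Sum>j'<N i. if i' = i \<and> j' = j then t j' else 0)"
      unfolding emb_component using block_coordinate_inj[of i' j i] assms True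
      by (intro sum.cong) auto
    also have "\<dots> = (if i' = i then t j else 0)"
      using True by (cases "i' = i") auto
    finally show ?thesis using True by (simp add: blk_eq)
  next
    case False
    then show ?thesis using assms(3) by (auto simp: blk_eq bvec_def)
  qed
qed

lemma blk_add: "blk U e N i (x + y) = (\<lambda>j. blk U e N i x j + blk U e N i y j)"
  by (auto simp: blk_eq)

lemma blk_scaleR: "blk U e N i (c *\<^sub>R y) = (\<lambda>j. c * blk U e N i y j)"
  by (auto simp: blk_eq)

lemma blk_zero: "blk U e N i 0 = (\<lambda>_. 0)"
  by (auto simp: blk_eq)

lemma blk_sum: "finite A \<Longrightarrow> blk U e N i (sum h A) = (\<lambda>j. \<Sum>a\<in>A. blk U e N i (h a) j)"
  by (auto simp: blk_eq sum_component)

lemma continuous_on_blk: "continuous_on UNIV (\<lambda>y. blk U e N i y j)"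
  by (cases "j < N i") (simp_all add: blk_eq continuous_on_component continuous_on_id)

lemma inner_eq_sum_blocks:
  "g \<bullet> y = (\<Sum>i<n. \<Sum>j<N i. blk U e N i g j * blk U e N i y j)"
proof -
  have bij: "bij_betw (\<lambda>p. \<sigma> (e p)) {(i, j). i < n \<and> j < N i} UNIV"
    using bij_betw_trans[OF part bij_\<sigma>] by (simp add: comp_def)
  have "g \<bullet> y = (\<Sum>k\<in>UNIV. g $ k * y $ k)" by (simp add: inner_vec_def)
  also have "\<dots> = (\<Sum>p\<in>{(i, j). i < n \<and> j < N i}. g $ \<sigma> (e p) * y $ \<sigma> (e p))"
    using sum.reindex_bij_betw[OF bij, of "\<lambda>k. g $ k * y $ k"] by simp
  also have "{(i, j). i < n \<and> j < N i} = Sigma {..<n} (\<lambda>i. {..<N i})" by auto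
  also have "(\<Sum>p\<in>Sigma {..<n} (\<lambda>i. {..<N i}). g $ \<sigma> (e p) * y $ \<sigma> (e p))
      = (\<Sum>i<n. \<Sum>j<N i. g $ \<sigma> (e (i, j)) * y $ \<sigma> (e (i, j)))"
    by (subst sum.Sigma) auto
  also have "\<dots> = (\<Sum>i<n. \<Sum>j<N i. blk U e N i g j * blk U e N i y j)"
    by (intro sum.cong) (auto simp: blk_eq)
  finally show ?thesis .
qed

definition block_support :: "nat \<Rightarrow> (real^'n) set" where
  "block_support i = {y. \<forall>k. (\<forall>j<N i. k \<noteq> \<sigma> (e (i, j))) \<longrightarrow> y $ k = 0}"

lemma subspace_block_support: "subspace (block_support i)"
  unfolding subspace_def block_support_def by auto

lemma closed_block_support: "closed (block_support i)"
proof -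
  have "block_support i = (\<Inter>k\<in>{k. \<forall>j<N i. k \<noteq> \<sigma> (e (i, j))}. {y. y $ k = 0})"
    unfolding block_support_def by auto
  moreover have "closed {y::real^'n. y $ k = 0}" for k
    by (intro closed_Collect_eq continuous_on_component continuous_on_id continuous_on_const)
  ultimately show ?thesis by auto
qed

lemma emb_in_block_support: "emb U e N i t \<in> block_support i"
  by (auto simp: block_support_def emb_component intro!: sum.neutral)

lemma block_support_blk_eq_0:
  assumes "y \<in> block_support i" "blk U e N i y = (\<lambda>_. 0)"
  shows "y = 0"
proof (rule vec_eq_iff[THEN iffD2], rule allI)
  fix k
  show "y $ k = 0 $ k"
  proof (cases "\<exists>j<N i. k = \<sigma> (e (i, j))")
    case True
    then obtain j where "j < N i" "k = \<sigma> (e (i, j))" by auto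
    then show ?thesis using fun_cong[OF assms(2), of j] by (simp add: blk_eq)
  next
    case False
    then show ?thesis using assms(1) unfolding block_support_def by auto
  qed
qed

lemma closed_sublevel_block_model:
  assumes Bm: "pos_def_mat (N i) Bm" and x0: "x0 \<in> bvec (N i)"
    and epi: "closed {(t, r::real). t \<in> bvec (N i) \<and> P t \<le> ereal r}"
  shows "closed {y \<in> block_support i. block_model (N i) Bm l g P x0 (blk U e N i y) \<le> ereal r}"
proof -
  define E where "E = blk U e N i"
  define q where "q = (\<lambda>y. (\<Sum>j<N i. g j * E y j) + l / 2 * qf (N i) Bm (E y))"
  define \<phi> where "\<phi> = (\<lambda>y. ((\<lambda>j. x0 j + E y j), r - q y))"
  have "block_model (N i) Bm l g P x0 (E y) \<le> ereal r \<longleftrightarrow> P (\<lambda>j. x0 j + E y j) \<le> ereal (r - q y)" for y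
    using block_model_eq[OF Bm blk_in_bvec[of U e N i y]] unfolding E_def q_def
    by (cases "P (\<lambda>j. x0 j + blk U e N i y j)") auto
  then have sublevel: "{y \<in> block_support i. block_model (N i) Bm l g P x0 (E y) \<le> ereal r}
      = block_support i \<inter> \<phi> -` {(t, r). t \<in> bvec (N i) \<and> P t \<le> ereal r}"
    using bvec_add[OF x0 blk_in_bvec[of U e N i]] unfolding \<phi>_def E_def by auto
  have "continuous_on UNIV (\<lambda>y. E y j)" for j
    unfolding E_def by (rule continuous_on_blk)
  then have "continuous_on UNIV \<phi>"
    unfolding \<phi>_def q_def qf_def
    by (intro continuous_intros continuous_on_coordinatewise_then_product)
  then have "closed (block_support i \<inter> \<phi> -` {(t, r). t \<in> bvec (N i) \<and> P t \<le> ereal r})"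
    by (intro closed_Int closed_block_support closed_vimage[OF epi])
  then show ?thesis unfolding sublevel[unfolded E_def] .
qed

text \<open>The block model is minimized over the subspace of \<open>\<real>\<^sup>N\<close> carrying block \<open>i\<close>, where
  compactness is available.\<close>
lemma block_model_attains_min:
  assumes i: "i < n" and Bm: "pos_def_mat (N i) Bm" and l: "l > 0"
    and P: "proper_closed_convex (N i) P" and x0: "x0 \<in> bvec (N i)" and Px0: "P x0 < \<infinity>"
  shows "\<exists>t\<in>bvec (N i). \<forall>s\<in>bvec (N i).
           block_model (N i) Bm l g P x0 t \<le> block_model (N i) Bm l g P x0 s"
proof -
  define S where "S = block_support i"
  define E where "E = blk U e N i"
  define lin where "lin = (\<lambda>y. \<Sum>j<N i. g j * E y j)"
  define Q where "Q = (\<lambda>y. l / 2 * qf (N i) Bm (E y))"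
  define P' where "P' = (\<lambda>y. P (\<lambda>j. x0 j + E y j))"
  define W where "W = (\<lambda>y. block_model (N i) Bm l g P x0 (E y))"
  have E_bvec: "E y \<in> bvec (N i)" for y unfolding E_def by (rule blk_in_bvec)
  have x0_E: "(\<lambda>j. x0 j + E y j) \<in> bvec (N i)" for y using bvec_add[OF x0 E_bvec] .
  have W: "W y = ereal (lin y + Q y) + P' y" for y
    unfolding W_def lin_def Q_def P'_def using block_model_eq[OF Bm E_bvec] by simp
  have "linear lin"
    by (rule linearI) (simp_all add: lin_def E_def blk_add blk_scaleR algebra_simps
        sum.distrib sum_distrib_left)
  have Q_hom: "Q (a *\<^sub>R y) = a\<^sup>2 * Q y" for a y
    unfolding Q_def E_def blk_scaleR qf_scale by simp
  have "Q y > 0" if "y \<in> S" "y \<noteq> 0" for y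
  proof -
    have "E y \<noteq> (\<lambda>_. 0)" using block_support_blk_eq_0 that unfolding S_def E_def by auto
    then have "qf (N i) Bm (E y) > 0" using Bm E_bvec unfolding pos_def_mat_def by auto
    then show ?thesis unfolding Q_def using l by simp
  qed
  moreover have "continuous_on S Q"
    using continuous_on_blk unfolding Q_def E_def qf_def
    by (intro continuous_intros) (auto intro: continuous_on_subset)
  ultimately obtain c where c: "c > 0" "\<And>y. y \<in> S \<Longrightarrow> c * (norm y)\<^sup>2 \<le> Q y"
    using homogeneous_quadratic_coercive_on_subspace[OF _ _ _ Q_hom]
      subspace_block_support closed_block_support unfolding S_def by metis
  have P'_convex: "P' (a *\<^sub>R y) \<le> ereal a * P' y + ereal (1 - a) * P' 0"
    if "0 \<le> a" "a \<le> 1" for y a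
  proof -
    have "(\<lambda>j. x0 j + E (a *\<^sub>R y) j) = (\<lambda>j. a * (x0 j + E y j) + (1 - a) * x0 j)"
      unfolding E_def blk_scaleR by (auto simp: algebra_simps)
    then show ?thesis
      using P x0_E x0 that unfolding P'_def proper_closed_convex_def E_def blk_zero by simp
  qed
  have "\<exists>y\<in>S. \<forall>z\<in>S. W y \<le> W z"
  proof (rule coercive_convex_attains_min[where P = P' and l = lin and Q = Q and c = c])
    show "- \<infinity> < P' y" for y using P x0_E unfolding P'_def proper_closed_convex_def by blast
    show "P' 0 < \<infinity>" using Px0 unfolding P'_def E_def blk_zero by simp
    show "closed {y \<in> S. W y \<le> ereal r}" for r
      using closed_sublevel_block_model[OF Bm x0] P
      unfolding S_def W_def E_def proper_closed_convex_def by blast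
  qed (use subspace_block_support closed_block_support \<open>linear lin\<close> Q_hom c P'_convex W
       in \<open>auto simp: S_def\<close>)
  then obtain y where y: "\<And>z. z \<in> S \<Longrightarrow> W y \<le> W z" by blast
  have "block_model (N i) Bm l g P x0 (E y) \<le> block_model (N i) Bm l g P x0 s" if "s \<in> bvec (N i)" for s
    using y[OF emb_in_block_support[of i s, folded S_def]] blk_emb[OF i i that]
    unfolding W_def E_def by simp
  then show ?thesis using E_bvec by blast
qed

lemma Lnorm_scaleR: "Lnorm n L B U e N (c *\<^sub>R y) = \<bar>c\<bar> * Lnorm n L B U e N y"
proof -
  have "(\<Sum>i<n. L i * (bnorm (N i) (B i) (blk U e N i (c *\<^sub>R y)))\<^sup>2)
      = c\<^sup>2 * (\<Sum>i<n. L i * (bnorm (N i) (B i) (blk U e N i y))\<^sup>2)"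
    unfolding blk_scaleR bnorm_scale by (simp add: sum_distrib_left power_mult_distrib algebra_simps)
  then show ?thesis unfolding Lnorm_def by (simp add: real_sqrt_mult)
qed

lemma blk_sum_emb:
  assumes "i < n" and "\<And>i'. i' < n \<Longrightarrow> T i' \<in> bvec (N i')"
  shows "blk U e N i (\<Sum>i'<n. emb U e N i' (T i')) = T i"
proof -
  have "blk U e N i (\<Sum>i'<n. emb U e N i' (T i')) = (\<lambda>j. \<Sum>i'<n. blk U e N i (emb U e N i' (T i')) j)"
    by (simp add: blk_sum)
  also have "\<dots> = (\<lambda>j. \<Sum>i'<n. if i' = i then T i j else 0)"
    using blk_emb[OF _ assms(1) assms(2)] by (intro ext sum.cong refl) auto
  also have "\<dots> = T i" using assms(1) by simp
  finally show ?thesis .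
qed

end

locale block_problem = block_partition n N U e \<sigma>
    for n N and U :: "real^'n^'n" and e \<sigma> +
  fixes B :: "nat \<Rightarrow> nat \<Rightarrow> nat \<Rightarrow> real" and L :: "nat \<Rightarrow> real"
    and f :: "real^'n \<Rightarrow> real" and Ps :: "nat \<Rightarrow> (nat \<Rightarrow> real) \<Rightarrow> ereal"
  assumes pos_def: "\<And>i. i < n \<Longrightarrow> pos_def_mat (N i) (B i)"
    and L_pos: "\<And>i. i < n \<Longrightarrow> L i > 0"
    and f_convex: "convex_on UNIV f" and f_diff: "\<And>y. f differentiable (at y)"
    and Ps_convex: "\<And>i. i < n \<Longrightarrow> proper_closed_convex (N i) (Ps i)"
begin

lemma Ps_blk_finite:
  assumes x: "Psi n Ps U e N x < \<infinity>" and i: "i < n"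
  shows "\<bar>Ps i (blk U e N i x)\<bar> \<noteq> \<infinity>"
proof -
  have "Ps i (blk U e N i x) \<noteq> \<infinity>"
  proof
    assume "Ps i (blk U e N i x) = \<infinity>"
    then have "Psi n Ps U e N x = \<infinity>" unfolding Psi_def using i by (subst sum_Pinfty) auto
    then show False using x by simp
  qed
  moreover have "Ps i (blk U e N i x) \<noteq> -\<infinity>"
    using Ps_convex[OF i] blk_in_bvec[of U e N i x] unfolding proper_closed_convex_def by auto
  ultimately show ?thesis by auto
qed

lemma Psi_finite:
  assumes "Psi n Ps U e N x < \<infinity>"
  shows "Psi n Ps U e N x = ereal (\<Sum>i<n. real_of_ereal (Ps i (blk U e N i x)))"
  unfolding Psi_def sum_ereal[symmetric] using Ps_blk_finite[OF assms]
  by (intro sum.cong) (auto simp: ereal_real')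

lemma Psi_convex_comb:
  assumes x: "Psi n Ps U e N x < \<infinity>" and y: "Psi n Ps U e N y < \<infinity>" and a: "0 \<le> a" "a \<le> 1"
  shows "Psi n Ps U e N ((1 - a) *\<^sub>R x + a *\<^sub>R y)
           \<le> ereal ((1 - a) * real_of_ereal (Psi n Ps U e N x) + a * real_of_ereal (Psi n Ps U e N y))"
proof -
  define p where "p = (\<lambda>i. real_of_ereal (Ps i (blk U e N i x)))"
  define q where "q = (\<lambda>i. real_of_ereal (Ps i (blk U e N i y)))"
  have "Psi n Ps U e N ((1 - a) *\<^sub>R x + a *\<^sub>R y)
      = (\<Sum>i<n. Ps i (\<lambda>j. (1 - a) * blk U e N i x j + (1 - (1 - a)) * blk U e N i y j))"
    unfolding Psi_def blk_add blk_scaleR by simp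
  also have "\<dots> \<le> (\<Sum>i<n. ereal ((1 - a) * p i + a * q i))"
  proof (rule sum_mono)
    fix i assume "i \<in> {..<n}"
    then have i: "i < n" by simp
    have "Ps i (\<lambda>j. b * t j + (1 - b) * s j) \<le> ereal b * Ps i t + ereal (1 - b) * Ps i s"
      if "t \<in> bvec (N i)" "s \<in> bvec (N i)" "0 \<le> b" "b \<le> 1" for t s b
      using Ps_convex[OF i] that unfolding proper_closed_convex_def by blast
    note this[OF blk_in_bvec[of U e N i x] blk_in_bvec[of U e N i y], of "1 - a"]
    moreover have "Ps i (blk U e N i x) = ereal (p i)" "Ps i (blk U e N i y) = ereal (q i)"
      using Ps_blk_finite[OF x i] Ps_blk_finite[OF y i] unfolding p_def q_def by (simp_all add: ereal_real')
    ultimately show "Ps i (\<lambda>j. (1 - a) * blk U e N i x j + (1 - (1 - a)) * blk U e N i y j)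
        \<le> ereal ((1 - a) * p i + a * q i)" using a by simp
  qed
  also have "\<dots> = ereal ((1 - a) * real_of_ereal (Psi n Ps U e N x) + a * real_of_ereal (Psi n Ps U e N y))"
    unfolding Psi_finite[OF x] Psi_finite[OF y] p_def q_def
    by (simp add: sum.distrib sum_distrib_left)
  finally show ?thesis .
qed

lemma Fobj_convex_comb:
  assumes x: "Fobj f n Ps U e N x = ereal u" and y: "Fobj f n Ps U e N y = ereal v"
    and a: "0 \<le> a" "a \<le> 1"
  shows "Fobj f n Ps U e N ((1 - a) *\<^sub>R x + a *\<^sub>R y) \<le> ereal ((1 - a) * u + a * v)"
proof -
  have Psi_x: "Psi n Ps U e N x = ereal (u - f x)" and Psi_y: "Psi n Ps U e N y = ereal (v - f y)"
    using x y unfolding Fobj_def by (cases "Psi n Ps U e N x"; cases "Psi n Ps U e N y"; simp)+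
  have "f ((1 - a) *\<^sub>R x + a *\<^sub>R y) \<le> (1 - a) * f x + a * f y"
    using convex_onD[OF f_convex, of a x y] a by simp
  moreover have "Psi n Ps U e N ((1 - a) *\<^sub>R x + a *\<^sub>R y) \<le> ereal ((1 - a) * (u - f x) + a * (v - f y))"
    using Psi_convex_comb[of x y a] Psi_x Psi_y a by simp
  ultimately show ?thesis unfolding Fobj_def
    by (cases "Psi n Ps U e N ((1 - a) *\<^sub>R x + a *\<^sub>R y)") (auto simp: algebra_simps)
qed

lemma Tblk_minimizes:
  assumes x: "Psi n Ps U e N x < \<infinity>" and i: "i < n"
  shows "Tblk f Ps L B U e N i x \<in> bvec (N i) \<and>
    (\<forall>s\<in>bvec (N i). Vfun f Ps L B U e N i x (Tblk f Ps L B U e N i x) \<le> Vfun f Ps L B U e N i x s)"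
proof -
  have "Ps i (blk U e N i x) < \<infinity>" using Ps_blk_finite[OF x i] by auto
  note minimizer_facts = pos_def[OF i] L_pos[OF i] Ps_convex[OF i] blk_in_bvec this
  let ?V = "block_model (N i) (B i) (L i) (blk U e N i (grad f x)) (Ps i) (blk U e N i x)"
  have "\<exists>!t. t \<in> bvec (N i) \<and> (\<forall>s\<in>bvec (N i). ?V t \<le> ?V s)"
  proof (rule ex_ex1I)
    show "\<exists>t. t \<in> bvec (N i) \<and> (\<forall>s\<in>bvec (N i). ?V t \<le> ?V s)"
      using block_model_attains_min[OF i minimizer_facts] by blast
    show "t1 = t2" if "t1 \<in> bvec (N i) \<and> (\<forall>s\<in>bvec (N i). ?V t1 \<le> ?V s)"
      and "t2 \<in> bvec (N i) \<and> (\<forall>s\<in>bvec (N i). ?V t2 \<le> ?V s)" for t1 t2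
      using block_model_minimizer_unique[OF minimizer_facts, of t1 _ t2] that by blast
  qed
  then show ?thesis unfolding Tblk_def Vfun_eq_block_model by (rule theI')
qed

lemma Hfun_eq_sum_Vfun:
  "Hfun n f Ps L B U e N x z = ereal (f x) + (\<Sum>i<n. Vfun f Ps L B U e N i x (blk U e N i z))"
proof -
  define g where "g = grad f x"
  define a where "a = (\<lambda>i. (\<Sum>j<N i. blk U e N i g j * blk U e N i z j)
                       + L i / 2 * (bnorm (N i) (B i) (blk U e N i z))\<^sup>2)"
  have "(Lnorm n L B U e N z)\<^sup>2 = (\<Sum>i<n. L i * (bnorm (N i) (B i) (blk U e N i z))\<^sup>2)"
    unfolding Lnorm_def using L_pos by (intro real_sqrt_pow2 sum_nonneg) (simp add: less_imp_le)
  then have "g \<bullet> z + 1/2 * (Lnorm n L B U e N z)\<^sup>2 = (\<Sum>i<n. a i)"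
    unfolding inner_eq_sum_blocks[of g z] a_def by (simp add: sum.distrib sum_distrib_left)
  then have "Hfun n f Ps L B U e N x z
      = ereal (f x) + ((\<Sum>i<n. ereal (a i)) + (\<Sum>i<n. Ps i (\<lambda>j. blk U e N i x j + blk U e N i z j)))"
    unfolding Hfun_def Psi_def blk_add g_def[symmetric] sum_ereal
    by (simp only: add.assoc plus_ereal.simps(1)[symmetric])
  also have "\<dots> = ereal (f x) + (\<Sum>i<n. Vfun f Ps L B U e N i x (blk U e N i z))"
    unfolding Vfun_def a_def g_def by (simp add: sum.distrib)
  finally show ?thesis .
qed

lemma Hfun_Tmap_le:
  assumes x: "Psi n Ps U e N x < \<infinity>"
  shows "Hfun n f Ps L B U e N x (Tmap n f Ps L B U e N x) \<le> Hfun n f Ps L B U e N x z"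
proof -
  have blk_Tmap: "blk U e N i (Tmap n f Ps L B U e N x) = Tblk f Ps L B U e N i x" if "i < n" for i
    unfolding Tmap_def by (rule blk_sum_emb[OF that]) (use Tblk_minimizes[OF x] in blast)
  show ?thesis
    unfolding Hfun_eq_sum_Vfun[of x]
  proof (intro add_left_mono sum_mono)
    fix i assume "i \<in> {..<n}"
    then show "Vfun f Ps L B U e N i x (blk U e N i (Tmap n f Ps L B U e N x))
        \<le> Vfun f Ps L B U e N i x (blk U e N i z)"
      using Tblk_minimizes[OF x, of i] blk_in_bvec[of U e N i z] by (simp add: blk_Tmap)
  qed
qed

lemma Hfun_Tmap_le_convex_comb:
  assumes x: "Fobj f n Ps U e N x = ereal u" and y: "Fobj f n Ps U e N y = ereal v"
    and a: "0 \<le> a" "a \<le> 1"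
  shows "Hfun n f Ps L B U e N x (Tmap n f Ps L B U e N x)
           \<le> ereal ((1 - a) * u + a * v + a\<^sup>2 / 2 * (Lnorm n L B U e N (x - y))\<^sup>2)"
proof -
  define z where "z = a *\<^sub>R (y - x)"
  have "Psi n Ps U e N x < \<infinity>" using x unfolding Fobj_def by (cases "Psi n Ps U e N x") auto
  then have "Hfun n f Ps L B U e N x (Tmap n f Ps L B U e N x) \<le> Hfun n f Ps L B U e N x z"
    by (rule Hfun_Tmap_le)
  also have "\<dots> \<le> Fobj f n Ps U e N (x + z) + ereal ((Lnorm n L B U e N z)\<^sup>2 / 2)"
    by (rule Hfun_le_Fobj[OF f_convex f_diff])
  also have "x + z = (1 - a) *\<^sub>R x + a *\<^sub>R y"
    unfolding z_def by (simp add: algebra_simps)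
  also have "(Lnorm n L B U e N z)\<^sup>2 = a\<^sup>2 * (Lnorm n L B U e N (x - y))\<^sup>2"
  proof -
    have z: "z = (- a) *\<^sub>R (x - y)" unfolding z_def by (simp add: algebra_simps)
    show ?thesis unfolding z Lnorm_scaleR by (simp add: power_mult_distrib)
  qed
  also have "Fobj f n Ps U e N ((1 - a) *\<^sub>R x + a *\<^sub>R y) + ereal (a\<^sup>2 * (Lnorm n L B U e N (x - y))\<^sup>2 / 2)
      \<le> ereal ((1 - a) * u + a * v) + ereal (a\<^sup>2 * (Lnorm n L B U e N (x - y))\<^sup>2 / 2)"
    by (rule add_right_mono[OF Fobj_convex_comb[OF x y a]])
  finally show ?thesis by simp
qed

end

theorem lemma3:
  fixes n :: nat and N :: "nat \<Rightarrow> nat"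
    and U :: "real^'n^'n" and e :: "nat \<times> nat \<Rightarrow> 'n"
    and B :: "nat \<Rightarrow> nat \<Rightarrow> nat \<Rightarrow> real" and L :: "nat \<Rightarrow> real"
    and f :: "real^'n \<Rightarrow> real" and Ps :: "nat \<Rightarrow> (nat \<Rightarrow> real) \<Rightarrow> ereal"
    and x xstar :: "real^'n"
  assumes U: "col_perm U"
    and part: "bij_betw e {(i, j). i < n \<and> j < N i} UNIV"
    and B: "\<And>i. i < n \<Longrightarrow> pos_def_mat (N i) (B i)"
    and f_convex: "convex_on UNIV f"
    and f_diff: "\<And>y. f differentiable (at y)"
    and L_pos: "\<And>i. i < n \<Longrightarrow> L i > 0"
    and lip: "\<And>i y t. i < n \<Longrightarrow> t \<in> bvec (N i) \<Longrightarrow>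
       dnorm (N i) (B i) (\<lambda>j. blk U e N i (grad f (y + emb U e N i t)) j - blk U e N i (grad f y) j)
         \<le> L i * bnorm (N i) (B i) t"
    and Psi_i: "\<And>i. i < n \<Longrightarrow> proper_closed_convex (N i) (Ps i)"
    and xstar: "xstar \<in> {z. \<forall>y. Fobj f n Ps U e N z \<le> Fobj f n Ps U e N y}"
    and x_dom: "Psi n Ps U e N x < \<infinity>"
  shows "let Fs = (INF y. Fobj f n Ps U e N y);
             D = real_of_ereal (Fobj f n Ps U e N x - Fs);
             R = Lnorm n L B U e N (x - xstar);
             Hx = Hfun n f Ps L B U e N x (Tmap n f Ps L B U e N x)
         in (D \<le> R\<^sup>2 \<longrightarrow> Hx - Fs \<le> ereal ((1 - D / (2 * R\<^sup>2)) * D)) \<and>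
            (\<not> D \<le> R\<^sup>2 \<longrightarrow> Hx - Fs \<le> ereal (R\<^sup>2 / 2) \<and> R\<^sup>2 / 2 < D / 2)"
proof -
  obtain \<sigma> where "bij \<sigma>" "U = (\<chi> k l. if k = \<sigma> l then 1 else 0)"
    using U unfolding col_perm_def by blast
  then interpret block_problem n N U e \<sigma> B L f Ps
    using part B L_pos f_convex f_diff Psi_i by unfold_locales auto
  define F where "F = Fobj f n Ps U e N"
  have Fs: "(INF y. F y) = F xstar"
    using xstar unfolding F_def by (auto intro: antisym INF_lower INF_greatest)
  obtain u where u: "F x = ereal u"
    using Psi_finite[OF x_dom] unfolding F_def Fobj_def by simp
  moreover have "F xstar \<le> F x" using xstar unfolding F_def by simp
  moreover have "F xstar > -\<infinity>" using Psi_finite[of xstar] unfolding F_def Fobj_def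
    by (cases "Psi n Ps U e N xstar") auto
  ultimately obtain v where v: "F xstar = ereal v" and "v \<le> u" by (cases "F xstar") auto
  have "Hfun n f Ps L B U e N x (Tmap n f Ps L B U e N x) - F xstar
      \<le> ereal ((1 - a) * (u - v) + a\<^sup>2 / 2 * (Lnorm n L B U e N (x - xstar))\<^sup>2)"
    if "0 \<le> a" "a \<le> 1" for a
    using Hfun_Tmap_le_convex_comb[OF u[unfolded F_def] v[unfolded F_def] that] v
    by (cases "Hfun n f Ps L B U e N x (Tmap n f Ps L B U e N x)") (auto simp: algebra_simps)
  from convex_upper_bound_cases[OF _ this] \<open>v \<le> u\<close>
  show ?thesis unfolding Let_def F_def[symmetric] Fs u v by simp
qed

end
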